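(* Let $G=(V,E,w)$ be a strongly connected graph on $n$ nodes with symmetric weights ($(i,j)\in E\iff(j,i)\in E$ and $w(i,j)=w(j,i)$), and let $S\subseteq V$. Then $$\operatorname{fp}'(G^S,0)=\frac1n\sum_{i,j\in V}\pi_i\, b^{(2)}_{ij}\,\psi_{ij},$$ where $\pi_i=\operatorname{fp}(G^S,0,\{i\})$ is the fixation probability from $\{i\}$ in the unbiased process ($\delta=0$), $b^{(2)}_{ij}=\sum_{l\in V}\lambda_l\,p_{il}\,p_{lj}$, and $(\psi_{ij})_{i,j\in V}$ is the solution of the linear system $$\psi_{ii}=0\ \ (i\in V),\qquad \psi_{ij}=\frac{1+\sum_{l\in V}\left(p_{il}\psi_{lj}+p_{jl}\psi_{il}\right)}{2}\ \ (i\neq j).$$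
   Context: Positional Voter model. A graph $G=(V,E,w)$ has node set $V$ with $|V|=n$, edge set $E\subseteq V\times V$ and weights $w\colon E\to\mathbb{R}_{>0}$; $\operatorname{in}(u)=\{v\in V:(v,u)\in E\}$. A configuration is a set $X\subseteq V$ (the nodes carrying the novel trait $A$). Given a biased set $S\subseteq V$ and bias $\delta\ge 0$, define $f^S_X(v\mid u)=1+\delta$ if $v\in X$ and $u\in S$, and $1$ otherwise. The process $(\mathcal{X}_t)_{t\ge0}$: given $\mathcal{X}_t=X$, a node $u$ is chosen uniformly at random from $V$, then $v\in\operatorname{in}(u)$ is chosen with probability $\frac{f^S_X(v\mid u)\,w(v,u)}{\sum_{x\in\operatorname{in}(u)} f^S_X(x\mid u)\,w(x,u)}$, and $\mathcal{X}_{t+1}=X\cup\{u\}$ if $v\in X$, $\mathcal{X}_{t+1}=X\setminus\{u\}$ otherwise. Define $\operatorname{fp}(G^S,\delta,X)=\mathbb{P}[\exists t\ge0:\mathcal{X}_t=V\mid\mathcal{X}_0=X]$ and $\operatorname{fp}(G^S,\delta)=\frac1n\sum_{u\in V}\operatorname{fp}(G^S,\delta,\{u\})$. Let $\operatorname{fp}'(G^S,0)=\frac{d}{d\delta}\big|_{\delta=0}\operatorname{fp}(G^S,\delta)$ (one-sided derivative at $0$). Write $w(i,j)=0$ if $(i,j)\notin E$, $p_{ij}=\frac{w(i,j)}{\sum_{l\in V}w(i,l)}$ (one-step random-walk transition probability), and $\lambda_i=1$ if $i\in S$, $\lambda_i=0$ otherwise. *)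

theory Defs
  imports "HOL-Analysis.Analysis"
begin

definition wt :: "('a \<times> 'a) set \<Rightarrow> ('a \<Rightarrow> 'a \<Rightarrow> real) \<Rightarrow> 'a \<Rightarrow> 'a \<Rightarrow> real" where
  "wt E w i j = (if (i, j) \<in> E then w i j else 0)"

definition in_nbrs :: "'a set \<Rightarrow> ('a \<times> 'a) set \<Rightarrow> 'a \<Rightarrow> 'a set" where
  "in_nbrs V E u = {v \<in> V. (v, u) \<in> E}"

definition fbias :: "'a set \<Rightarrow> real \<Rightarrow> 'a set \<Rightarrow> 'a \<Rightarrow> 'a \<Rightarrow> real" where
  "fbias S d X v u = (if v \<in> X \<and> u \<in> S then 1 + d else 1)"

text \<open>Probability that, having chosen node u, the node v is chosen to be copied.\<close>
definition choose_prob ::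
  "'a set \<Rightarrow> ('a \<times> 'a) set \<Rightarrow> ('a \<Rightarrow> 'a \<Rightarrow> real) \<Rightarrow> 'a set \<Rightarrow> real \<Rightarrow> 'a set \<Rightarrow> 'a \<Rightarrow> 'a \<Rightarrow> real" where
  "choose_prob V E w S d X u v =
     fbias S d X v u * w v u / (\<Sum>x\<in>in_nbrs V E u. fbias S d X x u * w x u)"

definition update :: "'a set \<Rightarrow> 'a \<Rightarrow> 'a \<Rightarrow> 'a set" where
  "update X u v = (if v \<in> X then insert u X else X - {u})"

text \<open>hit_within V E w S d T X = P[\<exists>t \<le> T. X_t = V | X_0 = X],
  defined by first-step decomposition of the Positional Voter chain.\<close>
fun hit_within ::
  "'a set \<Rightarrow> ('a \<times> 'a) set \<Rightarrow> ('a \<Rightarrow> 'a \<Rightarrow> real) \<Rightarrow> 'a set \<Rightarrow> real \<Rightarrow> nat \<Rightarrow> 'a set \<Rightarrow> real" where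
  "hit_within V E w S d 0 X = (if X = V then 1 else 0)"
| "hit_within V E w S d (Suc T) X =
     (if X = V then 1 else
      (\<Sum>u\<in>V. (1 / real (card V)) *
         (\<Sum>v\<in>in_nbrs V E u. choose_prob V E w S d X u v *
             hit_within V E w S d T (update X u v))))"

definition fp :: "'a set \<Rightarrow> ('a \<times> 'a) set \<Rightarrow> ('a \<Rightarrow> 'a \<Rightarrow> real) \<Rightarrow> 'a set \<Rightarrow> real \<Rightarrow> 'a set \<Rightarrow> real" where
  "fp V E w S d X = lim (\<lambda>T. hit_within V E w S d T X)"

definition fp_avg :: "'a set \<Rightarrow> ('a \<times> 'a) set \<Rightarrow> ('a \<Rightarrow> 'a \<Rightarrow> real) \<Rightarrow> 'a set \<Rightarrow> real \<Rightarrow> real" where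
  "fp_avg V E w S d = (1 / real (card V)) * (\<Sum>u\<in>V. fp V E w S d {u})"

definition ptrans :: "'a set \<Rightarrow> ('a \<times> 'a) set \<Rightarrow> ('a \<Rightarrow> 'a \<Rightarrow> real) \<Rightarrow> 'a \<Rightarrow> 'a \<Rightarrow> real" where
  "ptrans V E w i j = wt E w i j / (\<Sum>l\<in>V. wt E w i l)"

definition lam :: "'a set \<Rightarrow> 'a \<Rightarrow> real" where
  "lam S i = (if i \<in> S then 1 else 0)"

definition b2 :: "'a set \<Rightarrow> ('a \<times> 'a) set \<Rightarrow> ('a \<Rightarrow> 'a \<Rightarrow> real) \<Rightarrow> 'a set \<Rightarrow> 'a \<Rightarrow> 'a \<Rightarrow> real" where
  "b2 V E w S i j = (\<Sum>l\<in>V. lam S l * ptrans V E w i l * ptrans V E w l j)"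

definition psi_system :: "'a set \<Rightarrow> ('a \<times> 'a) set \<Rightarrow> ('a \<Rightarrow> 'a \<Rightarrow> real) \<Rightarrow> ('a \<Rightarrow> 'a \<Rightarrow> real) \<Rightarrow> bool" where
  "psi_system V E w \<psi> \<longleftrightarrow>
     (\<forall>i\<in>V. \<psi> i i = 0) \<and>
     (\<forall>i\<in>V. \<forall>j\<in>V. i \<noteq> j \<longrightarrow>
        \<psi> i j = (1 + (\<Sum>l\<in>V. ptrans V E w i l * \<psi> l j + ptrans V E w j l * \<psi> i l)) / 2)"

end

theory Submission
  imports Defs "Jordan_Normal_Form.Determinant"
begin

text \<open>For every bias \<open>\<delta> \<ge> 0\<close> the fixation probabilities are harmonic for the one-step
  operator of the chain, with boundary values 0 at \<open>{}\<close> and 1 at \<open>V\<close>. Strong connectivity lets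
  every configuration reach the boundary, so a discrete maximum principle makes harmonic functions
  unique; at \<open>\<delta> = 0\<close> the solution is \<open>X \<mapsto> \<Sum>i\<in>X. \<pi> i\<close>, where \<open>\<pi>\<close> is the degree-proportional
  stationary distribution of the reversible random walk.

  To first order in \<open>\<delta>\<close>, a chosen node \<open>u\<in>S\<close> adopts the trait with probability
  \<open>a + \<delta> a (1 - a)\<close>, \<open>a\<close> being the fraction of its neighbours in \<open>X\<close>. Hence the derivative \<open>\<Phi>\<close>
  solves the unbiased harmonic equations with source \<open>1/n \<Sum>u. \<lambda>\<^sub>u \<pi>\<^sub>u a\<^sub>u (1 - a\<^sub>u)\<close>, and the
  remainder is \<open>O(\<delta>\<^sup>2)\<close> because the unbiased system is invertible. The source is the combination
  of the indicators \<open>[i \<in> X, j \<notin> X]\<close> with weights \<open>\<pi> i * b2 i j\<close>, so \<open>\<Phi>\<close> is a combination of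
  these indicators whose coefficients solve the system adjoint to the one defining \<open>\<psi>\<close> (the
  expected meeting time of two random walkers, one of which moves at each step). Averaging \<open>\<Phi>\<close>
  over singletons and using this duality gives the formula.\<close>

lemma mat_inverse_if_mult_vec_inj:
  fixes M :: "'b :: field mat"
  assumes M: "M \<in> carrier_mat m m"
    and inj: "\<And>v. v \<in> carrier_vec m \<Longrightarrow> M *\<^sub>v v = 0\<^sub>v m \<Longrightarrow> v = 0\<^sub>v m"
  shows "\<exists>B \<in> carrier_mat m m. B * M = 1\<^sub>m m \<and> M * B = 1\<^sub>m m"
proof -
  have "Determinant.det M \<noteq> 0"
    using det_0_iff_vec_prod_zero_field[OF M] inj by blast
  from det_non_zero_imp_unit[OF M this, of "()"] show ?thesis
    unfolding Units_def by (simp add: ring_mat_simps)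
qed

lemma inverse_if_injective_on_finite:
  fixes A :: "'s \<Rightarrow> 's \<Rightarrow> 'b :: field"
  assumes "finite I"
    and inj: "\<And>f. \<forall>i\<in>I. (\<Sum>j\<in>I. A i j * f j) = 0 \<Longrightarrow> \<forall>i\<in>I. f i = 0"
  shows "\<exists>B. (\<forall>i\<in>I. \<forall>k\<in>I. (\<Sum>j\<in>I. A i j * B j k) = (if i = k then 1 else 0))
           \<and> (\<forall>i\<in>I. \<forall>k\<in>I. (\<Sum>j\<in>I. B i j * A j k) = (if i = k then 1 else 0))"
proof -
  define m where "m = card I"
  obtain e where e: "bij_betw e {..<m} I"
    using ex_bij_betw_nat_finite[OF \<open>finite I\<close>] unfolding m_def atLeast0LessThan by blast
  define ix where "ix = the_inv_into {..<m} e"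
  have ix_e: "ix (e b) = b" if "b < m" for b
    using that e unfolding ix_def by (simp add: bij_betw_def the_inv_into_f_f)
  have ix: "ix i < m" "e (ix i) = i" if "i \<in> I" for i
    using that e ix_e by (auto simp: bij_betw_def)
  have reindex: "(\<Sum>j\<in>I. g j) = (\<Sum>b<m. g (e b))" for g :: "'s \<Rightarrow> 'b"
    by (rule sum.reindex_bij_betw[OF e, symmetric])
  define M where "M = mat m m (\<lambda>(a, b). A (e a) (e b))"
  have M: "M \<in> carrier_mat m m" unfolding M_def by simp
  have M_vec: "(M *\<^sub>v v) $ a = (\<Sum>b<m. A (e a) (e b) * v $ b)" if "a < m" "v \<in> carrier_vec m" for a v
    using that unfolding M_def by (simp add: mult_mat_vec_def scalar_prod_def atLeast0LessThan)
  obtain B where B: "B \<in> carrier_mat m m" "B * M = 1\<^sub>m m" "M * B = 1\<^sub>m m"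
  proof -
    have "v = 0\<^sub>v m" if v: "v \<in> carrier_vec m" "M *\<^sub>v v = 0\<^sub>v m" for v
    proof -
      have "\<forall>i\<in>I. (\<Sum>j\<in>I. A i j * v $ ix j) = 0"
        using M_vec[OF ix(1) v(1)] v(2) ix by (simp add: reindex ix_e)
      from inj[OF this] have "v $ b = 0" if "b < m" for b
        using that ix_e e by (metis bij_betwE lessThan_iff)
      then show ?thesis using v(1) by (intro eq_vecI) auto
    qed
    then show ?thesis using that mat_inverse_if_mult_vec_inj[OF M] by blast
  qed
  define Bf where "Bf i j = B $$ (ix i, ix j)" for i j
  have "(\<Sum>j\<in>I. A i j * Bf j k) = (M * B) $$ (ix i, ix k)"
    and "(\<Sum>j\<in>I. Bf i j * A j k) = (B * M) $$ (ix i, ix k)" if "i \<in> I" "k \<in> I" for i k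
    using that ix B(1) M unfolding reindex Bf_def
    by (simp_all add: M_def index_mult_mat scalar_prod_def atLeast0LessThan ix_e)
  moreover have "(1\<^sub>m m :: 'b mat) $$ (ix i, ix k) = (if i = k then 1 else 0)" if "i \<in> I" "k \<in> I" for i k
    using ix that by (metis index_one_mat(1))
  ultimately show ?thesis
    by (intro exI[of _ Bf] conjI ballI) (simp_all add: B(2,3))
qed

locale absorbing_chain =
  fixes St :: "'s set" and Bd :: "'s set" and K :: "'k set"
    and c :: "'s \<Rightarrow> 'k \<Rightarrow> real" and nx :: "'s \<Rightarrow> 'k \<Rightarrow> 's" and \<mu> :: "'s \<Rightarrow> nat"
  assumes finite_states: "finite St" and finite_moves: "finite K"
    and weight_nonneg: "\<And>X k. X \<in> St \<Longrightarrow> X \<notin> Bd \<Longrightarrow> k \<in> K \<Longrightarrow> 0 \<le> c X k"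
    and move_closed: "\<And>X k. X \<in> St \<Longrightarrow> X \<notin> Bd \<Longrightarrow> k \<in> K \<Longrightarrow> nx X k \<in> St"
    and weights_sum: "\<And>X. X \<in> St \<Longrightarrow> X \<notin> Bd \<Longrightarrow> (\<Sum>k\<in>K. c X k) = 1"
    and move_to_boundary: "\<And>X. X \<in> St \<Longrightarrow> X \<notin> Bd \<Longrightarrow>
       \<exists>k\<in>K. 0 < c X k \<and> (nx X k \<in> Bd \<or> \<mu> (nx X k) < \<mu> X)"
begin

text \<open>A maximum attained in the interior propagates along every move of positive weight;
  following moves that decrease \<open>\<mu>\<close>, it reaches the boundary.\<close>

lemma max_principle:
  assumes sub: "\<And>X. X \<in> St \<Longrightarrow> X \<notin> Bd \<Longrightarrow> f X \<le> (\<Sum>k\<in>K. c X k * f (nx X k))"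
    and boundary: "\<And>X. X \<in> St \<Longrightarrow> X \<in> Bd \<Longrightarrow> f X \<le> 0"
    and X: "X \<in> St"
  shows "f X \<le> 0"
proof (rule ccontr)
  assume "\<not> f X \<le> 0"
  define Mx where "Mx = Max (f ` St)"
  have le_Mx: "\<And>Y. Y \<in> St \<Longrightarrow> f Y \<le> Mx"
    unfolding Mx_def using finite_states by auto
  have Mx_pos: "Mx > 0" using le_Mx[OF X] \<open>\<not> f X \<le> 0\<close> by simp
  have not_max: "\<forall>Y\<in>St. \<mu> Y = m \<longrightarrow> f Y \<noteq> Mx" for m
  proof (induction m rule: less_induct)
    case (less m)
    show ?case
    proof (intro ballI impI notI)
      fix Y assume Y: "Y \<in> St" "\<mu> Y = m" "f Y = Mx"
      have int: "Y \<notin> Bd" using boundary[OF Y(1)] Y(3) Mx_pos by force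
      have "(\<Sum>k\<in>K. c Y k * (Mx - f (nx Y k))) = Mx * (\<Sum>k\<in>K. c Y k) - (\<Sum>k\<in>K. c Y k * f (nx Y k))"
        by (simp add: algebra_simps sum_subtractf sum_distrib_left)
      also have "\<dots> \<le> 0" using weights_sum[OF Y(1) int] sub[OF Y(1) int] Y(3) by simp
      finally have "(\<Sum>k\<in>K. c Y k * (Mx - f (nx Y k))) \<le> 0" .
      moreover have "\<forall>k\<in>K. 0 \<le> c Y k * (Mx - f (nx Y k))"
        using weight_nonneg[OF Y(1) int] move_closed[OF Y(1) int] le_Mx by simp
      ultimately have "\<forall>k\<in>K. c Y k * (Mx - f (nx Y k)) = 0"
        using sum_nonneg_eq_0_iff[OF finite_moves] by (metis (no_types, lifting) antisym sum_nonneg)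
      moreover obtain k where k: "k \<in> K" "0 < c Y k" "nx Y k \<in> Bd \<or> \<mu> (nx Y k) < \<mu> Y"
        using move_to_boundary[OF Y(1) int] by blast
      ultimately have "f (nx Y k) = Mx" by force
      moreover have "nx Y k \<in> St" using move_closed[OF Y(1) int k(1)] .
      ultimately show False
        using k(3) boundary Mx_pos less.IH Y(2) by fastforce
    qed
  qed
  have "Mx \<in> f ` St" unfolding Mx_def using finite_states X by (intro Max_in) auto
  then show False using not_max by blast
qed

lemma harmonic_eq_zero:
  assumes harm: "\<And>X. X \<in> St \<Longrightarrow> X \<notin> Bd \<Longrightarrow> f X = (\<Sum>k\<in>K. c X k * f (nx X k))"
    and boundary: "\<And>X. X \<in> St \<Longrightarrow> X \<in> Bd \<Longrightarrow> f X = 0"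
    and X: "X \<in> St"
  shows "f X = 0"
proof -
  have "f X \<le> 0" by (rule max_principle) (use harm boundary X in auto)
  moreover have "- f X \<le> 0"
    by (rule max_principle[of "\<lambda>X. - f X"]) (use harm boundary X in \<open>auto simp: sum_negf\<close>)
  ultimately show ?thesis by simp
qed

definition "chain_matrix X Y = (if Y = X then 1 else 0)
  - (if X \<in> Bd then 0 else (\<Sum>k\<in>K. c X k * (if nx X k = Y then 1 else 0)))"

lemma chain_matrix_apply:
  assumes X: "X \<in> St"
  shows "(\<Sum>Y\<in>St. chain_matrix X Y * f Y)
    = (if X \<in> Bd then f X else f X - (\<Sum>k\<in>K. c X k * f (nx X k)))"
proof -
  have id: "(\<Sum>Y\<in>St. (if Y = X then 1 else 0) * f Y) = f X"
    using X finite_states by (simp add: if_distrib[of "\<lambda>x. x * _"] cong: if_cong)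
  have moves: "(\<Sum>Y\<in>St. (\<Sum>k\<in>K. c X k * (if nx X k = Y then 1 else 0)) * f Y)
      = (\<Sum>k\<in>K. c X k * f (nx X k))" if "X \<notin> Bd"
  proof -
    have "(\<Sum>Y\<in>St. (\<Sum>k\<in>K. c X k * (if nx X k = Y then 1 else 0)) * f Y)
        = (\<Sum>k\<in>K. c X k * (\<Sum>Y\<in>St. if nx X k = Y then f Y else 0))"
      unfolding sum_distrib_right sum_distrib_left by (subst sum.swap) (intro sum.cong refl; simp)
    also have "\<dots> = (\<Sum>k\<in>K. c X k * f (nx X k))"
      using move_closed[OF X that] finite_states by simp
    finally show ?thesis .
  qed
  show ?thesis
    unfolding chain_matrix_def left_diff_distrib sum_subtractf id using moves by simp
qed

lemma chain_matrix_inverse: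
  "\<exists>B. (\<forall>X\<in>St. \<forall>Z\<in>St. (\<Sum>Y\<in>St. chain_matrix X Y * B Y Z) = (if X = Z then 1 else 0))
     \<and> (\<forall>X\<in>St. \<forall>Z\<in>St. (\<Sum>Y\<in>St. B X Y * chain_matrix Y Z) = (if X = Z then 1 else 0))"
proof (rule inverse_if_injective_on_finite[OF finite_states])
  fix f assume "\<forall>X\<in>St. (\<Sum>Y\<in>St. chain_matrix X Y * f Y) = 0"
  then have "X \<in> St \<Longrightarrow> (if X \<in> Bd then f X else f X - (\<Sum>k\<in>K. c X k * f (nx X k))) = 0" for X
    using chain_matrix_apply by simp
  then show "\<forall>X\<in>St. f X = 0"
    using harmonic_eq_zero[of f] by (metis (no_types, lifting) eq_iff_diff_eq_0)
qed

lemma chain_matrix_solvable: "\<exists>f. \<forall>X\<in>St. (\<Sum>Y\<in>St. chain_matrix X Y * f Y) = g X"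
proof -
  obtain B where B: "\<forall>X\<in>St. \<forall>Z\<in>St. (\<Sum>Y\<in>St. chain_matrix X Y * B Y Z) = (if X = Z then 1 else 0)"
    using chain_matrix_inverse by blast
  have "(\<Sum>Y\<in>St. chain_matrix X Y * (\<Sum>Z\<in>St. B Y Z * g Z)) = g X" if X: "X \<in> St" for X
  proof -
    have "(\<Sum>Y\<in>St. chain_matrix X Y * (\<Sum>Z\<in>St. B Y Z * g Z))
        = (\<Sum>Z\<in>St. (\<Sum>Y\<in>St. chain_matrix X Y * B Y Z) * g Z)"
      unfolding sum_distrib_left sum_distrib_right by (subst sum.swap) (simp add: mult.assoc)
    also have "\<dots> = (\<Sum>Z\<in>St. if X = Z then g Z else 0)"
      using B X by (intro sum.cong refl) auto
    finally show ?thesis using X finite_states by simp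
  qed
  then show ?thesis by (intro exI[of _ "\<lambda>Y. \<Sum>Z\<in>St. B Y Z * g Z"]) blast
qed

lemma chain_matrix_adjoint_solvable: "\<exists>h. \<forall>Z\<in>St. (\<Sum>Y\<in>St. h Y * chain_matrix Y Z) = g Z"
proof -
  obtain B where B: "\<forall>X\<in>St. \<forall>Z\<in>St. (\<Sum>Y\<in>St. B X Y * chain_matrix Y Z) = (if X = Z then 1 else 0)"
    using chain_matrix_inverse by blast
  have "(\<Sum>Y\<in>St. (\<Sum>X\<in>St. g X * B X Y) * chain_matrix Y Z) = g Z" if Z: "Z \<in> St" for Z
  proof -
    have "(\<Sum>Y\<in>St. (\<Sum>X\<in>St. g X * B X Y) * chain_matrix Y Z)
        = (\<Sum>X\<in>St. g X * (\<Sum>Y\<in>St. B X Y * chain_matrix Y Z))"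
      unfolding sum_distrib_left sum_distrib_right by (subst sum.swap) (simp add: mult.assoc)
    also have "\<dots> = (\<Sum>X\<in>St. if X = Z then g X else 0)"
      using B Z by (intro sum.cong refl) auto
    finally show ?thesis using Z finite_states by simp
  qed
  then show ?thesis by (intro exI[of _ "\<lambda>Y. \<Sum>X\<in>St. g X * B X Y"]) blast
qed

lemma chain_matrix_bounded_below:
  "\<exists>\<beta>\<ge>0. \<forall>f s. (\<forall>X\<in>St. \<bar>\<Sum>Y\<in>St. chain_matrix X Y * f Y\<bar> \<le> s) \<longrightarrow> (\<Sum>X\<in>St. \<bar>f X\<bar>) \<le> \<beta> * s"
proof -
  obtain B where B: "\<forall>X\<in>St. \<forall>Z\<in>St. (\<Sum>Y\<in>St. B X Y * chain_matrix Y Z) = (if X = Z then 1 else 0)"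
    using chain_matrix_inverse by blast
  define \<beta> where "\<beta> = (\<Sum>X\<in>St. \<Sum>Y\<in>St. \<bar>B X Y\<bar>)"
  have "(\<Sum>X\<in>St. \<bar>f X\<bar>) \<le> \<beta> * s"
    if s: "\<forall>X\<in>St. \<bar>\<Sum>Y\<in>St. chain_matrix X Y * f Y\<bar> \<le> s" for f s
  proof -
    define g where "g X = (\<Sum>Y\<in>St. chain_matrix X Y * f Y)" for X
    have "f X = (\<Sum>Y\<in>St. B X Y * g Y)" if X: "X \<in> St" for X
    proof -
      have "(\<Sum>Y\<in>St. B X Y * g Y) = (\<Sum>Z\<in>St. (\<Sum>Y\<in>St. B X Y * chain_matrix Y Z) * f Z)"
        unfolding g_def sum_distrib_left sum_distrib_right by (subst sum.swap) (simp add: mult.assoc)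
      also have "\<dots> = (\<Sum>Z\<in>St. if X = Z then f Z else 0)"
        using B X by (intro sum.cong refl) auto
      finally show ?thesis using X finite_states by simp
    qed
    then have "\<bar>f X\<bar> \<le> (\<Sum>Y\<in>St. \<bar>B X Y\<bar>) * s" if X: "X \<in> St" for X
      using X s unfolding g_def sum_distrib_right
      by (auto intro!: order_trans[OF sum_abs] sum_mono simp: abs_mult mult_left_mono)
    then show ?thesis unfolding \<beta>_def sum_distrib_right by (intro sum_mono) auto
  qed
  moreover have "\<beta> \<ge> 0" unfolding \<beta>_def by (simp add: sum_nonneg)
  ultimately show ?thesis by blast
qed

end

lemma exists_edge_leaving:
  assumes "(x, y) \<in> E\<^sup>*" "x \<in> X" "y \<notin> X"
  shows "\<exists>v u. (v, u) \<in> E \<and> v \<in> X \<and> u \<notin> X"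
  using assms by (induction rule: rtrancl_induct) auto

text \<open>\<open>(1 + t) a / (1 + t a)\<close> is the weight of a subset of mass \<open>a\<close> after its elements are
  reweighted by \<open>1 + t\<close>.\<close>

lemma reweighted_fraction_bounds:
  fixes t a :: real
  assumes t: "0 \<le> t" and a: "0 \<le> a" "a \<le> 1"
  shows "\<bar>(1 + t) * a / (1 + t * a) - a\<bar> \<le> t"
    and "\<bar>(1 + t) * a / (1 + t * a) - a - t * (a * (1 - a))\<bar> \<le> t\<^sup>2"
proof -
  have ta: "0 \<le> t * a" "t * a \<le> t" using t a by (auto simp: mult_left_le)
  have q: "1 \<le> 1 + t * a" using ta by linarith
  have v: "0 \<le> a * (1 - a)" "a * (1 - a) \<le> 1" using a by (auto simp: mult_le_one)
  have "(1 + t) * a / (1 + t * a) - a = t * (a * (1 - a)) / (1 + t * a)"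
    using q by (simp add: field_simps)
  moreover have "0 \<le> t * (a * (1 - a)) / (1 + t * a)" "t * (a * (1 - a)) / (1 + t * a) \<le> t"
    using q v t ta by (auto simp: divide_le_eq mult_left_le intro: order_trans[OF _ mult_left_le] mult_mono)
  ultimately show "\<bar>(1 + t) * a / (1 + t * a) - a\<bar> \<le> t" by (metis abs_of_nonneg)
  have "(1 + t) * a / (1 + t * a) - a - t * (a * (1 - a)) = - ((t * a) * (t * (a * (1 - a))) / (1 + t * a))"
    using q by (simp add: field_simps)
  moreover have "0 \<le> (t * a) * (t * (a * (1 - a))) / (1 + t * a)"
    using ta v t q by simp
  moreover have "(t * a) * (t * (a * (1 - a))) / (1 + t * a) \<le> t * t"
  proof -
    have "(t * a) * (t * (a * (1 - a))) \<le> t * t" using ta v t by (intro mult_mono) (auto simp: mult_left_le)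
    moreover have "(t * a) * (t * (a * (1 - a))) / (1 + t * a) \<le> (t * a) * (t * (a * (1 - a)))"
      using divide_left_mono[OF q, of "(t * a) * (t * (a * (1 - a)))"] ta v t by simp
    ultimately show ?thesis by linarith
  qed
  ultimately show "\<bar>(1 + t) * a / (1 + t * a) - a - t * (a * (1 - a))\<bar> \<le> t\<^sup>2"
    unfolding power2_eq_square by (metis abs_minus_cancel abs_of_nonneg)
qed

lemma has_real_derivative_at_right_if_error_bound:
  fixes F :: "real \<Rightarrow> real"
  assumes r: "0 < r"
    and bound: "\<And>x. a < x \<Longrightarrow> x < a + r \<Longrightarrow> \<bar>(F x - F a) / (x - a) - D\<bar> \<le> C * (x - a)"
  shows "(F has_real_derivative D) (at a within {a..})"
  unfolding has_field_derivative_iff tendsto_iff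
proof (intro allI impI)
  fix e :: real assume e: "0 < e"
  define s where "s = min r (e / (\<bar>C\<bar> + 1))"
  have s: "0 < s" unfolding s_def using r e by simp
  show "\<forall>\<^sub>F x in at a within {a..}. dist ((F x - F a) / (x - a)) D < e"
    unfolding eventually_at
  proof (intro exI[of _ s] conjI s ballI impI)
    fix x :: real assume x: "x \<in> {a..}" "x \<noteq> a \<and> dist x a < s"
    have x': "a < x" "x < a + r" "x - a < e / (\<bar>C\<bar> + 1)"
      using x unfolding s_def dist_real_def by auto
    have "C * (x - a) \<le> \<bar>C\<bar> * (e / (\<bar>C\<bar> + 1))"
      using x' by (intro order_trans[OF mult_right_mono[of C "\<bar>C\<bar>"]] mult_left_mono) auto
    also have "\<dots> < e" using e by (simp add: field_simps)
    finally show "dist ((F x - F a) / (x - a)) D < e"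
      using bound[OF x'(1,2)] by (simp add: dist_real_def)
  qed
qed

locale positional_voter =
  fixes V :: "'a set" and E :: "('a \<times> 'a) set" and w :: "'a \<Rightarrow> 'a \<Rightarrow> real" and S :: "'a set"
  assumes finite_V: "finite V"
    and E_subset: "E \<subseteq> V \<times> V"
    and w_pos: "\<forall>i j. (i, j) \<in> E \<longrightarrow> w i j > 0"
    and strongly_connected: "\<forall>i\<in>V. \<forall>j\<in>V. (i, j) \<in> E\<^sup>*"
    and E_sym: "\<forall>i j. (i, j) \<in> E \<longleftrightarrow> (j, i) \<in> E"
    and w_sym: "\<forall>i j. (i, j) \<in> E \<longrightarrow> w i j = w j i"
    and card_V: "card V \<ge> 2"
begin

abbreviation "p \<equiv> ptrans V E w"
abbreviation "hit d T X \<equiv> hit_within V E w S d T X"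
abbreviation "\<phi> d X \<equiv> fp V E w S d X"

definition "n = real (card V)"
definition "deg u = (\<Sum>l\<in>V. wt E w u l)"
definition "\<pi> u = deg u / (\<Sum>v\<in>V. deg v)"
definition "nbr_frac X u = (\<Sum>v\<in>X. p u v)"
definition "birth_prob d X u =
  (1 + d * lam S u) * nbr_frac X u / (1 + d * lam S u * nbr_frac X u)"
definition "step d f X = (1 / n) *
  (\<Sum>u\<in>V. birth_prob d X u * f (insert u X) + (1 - birth_prob d X u) * f (X - {u}))"

lemma n_pos: "n > 0"
  using card_V unfolding n_def by simp

lemma average_const: "(1 / n) * (\<Sum>u\<in>V. c) = c"
  using n_pos unfolding n_def by simp

lemma wt_nonneg: "wt E w i j \<ge> 0"
  unfolding wt_def using w_pos by (auto simp: less_imp_le)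

lemma wt_sym: "wt E w i j = wt E w j i"
  unfolding wt_def using E_sym w_sym by auto

lemma wt_pos: "(i, j) \<in> E \<Longrightarrow> wt E w i j > 0"
  unfolding wt_def using w_pos by auto

lemma exists_out_edge:
  assumes "u \<in> V" shows "\<exists>l\<in>V. (u, l) \<in> E"
proof -
  obtain j where j: "j \<in> V" "j \<noteq> u"
    using card_V assms by (metis card_le_Suc0_iff_eq[OF finite_V] not_less_eq_eq numeral_2_eq_2)
  then have "(u, j) \<in> E\<^sup>*" using strongly_connected assms by blast
  then obtain l where "(u, l) \<in> E" using j(2) by (metis converse_rtranclE)
  then show ?thesis using E_subset by auto
qed

lemma deg_pos: "u \<in> V \<Longrightarrow> deg u > 0"
proof -
  assume u: "u \<in> V"
  obtain l where l: "l \<in> V" "(u, l) \<in> E" using exists_out_edge[OF u] by blast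
  have "wt E w u l \<le> deg u" unfolding deg_def
    by (rule member_le_sum) (use l finite_V wt_nonneg in auto)
  with wt_pos[OF l(2)] show ?thesis by simp
qed

lemma p_eq: "p u v = wt E w u v / deg u"
  unfolding ptrans_def deg_def by simp

lemma p_nonneg: "p u v \<ge> 0"
  unfolding p_eq deg_def using wt_nonneg by (simp add: sum_nonneg)

lemma p_pos: "(u, v) \<in> E \<Longrightarrow> p u v > 0"
  using wt_pos[of u v] deg_pos[of u] E_subset unfolding p_eq by auto

lemma p_sum: "u \<in> V \<Longrightarrow> (\<Sum>v\<in>V. p u v) = 1"
  using deg_pos[of u] unfolding p_eq by (simp add: sum_divide_distrib[symmetric] deg_def)

lemma \<pi>_nonneg: "\<pi> u \<ge> 0"
  unfolding \<pi>_def deg_def using wt_nonneg by (simp add: sum_nonneg)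

lemma \<pi>_sum: "(\<Sum>u\<in>V. \<pi> u) = 1"
proof -
  have "V \<noteq> {}" using card_V by auto
  then have "(\<Sum>u\<in>V. deg u) > 0" using deg_pos finite_V by (intro sum_pos) auto
  then show ?thesis unfolding \<pi>_def by (simp add: sum_divide_distrib[symmetric])
qed

lemma \<pi>_le_1: "u \<in> V \<Longrightarrow> \<pi> u \<le> 1"
  using member_le_sum[of u V \<pi>] \<pi>_nonneg finite_V \<pi>_sum by auto

lemma reversible: "u \<in> V \<Longrightarrow> v \<in> V \<Longrightarrow> \<pi> u * p u v = \<pi> v * p v u"
  using deg_pos[of u] deg_pos[of v] wt_sym[of u v] unfolding \<pi>_def p_eq by simp

lemma stationary: "v \<in> V \<Longrightarrow> (\<Sum>u\<in>V. \<pi> u * p u v) = \<pi> v"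
proof -
  assume v: "v \<in> V"
  have "(\<Sum>u\<in>V. \<pi> u * p u v) = (\<Sum>u\<in>V. \<pi> v * p v u)"
    using reversible v by (intro sum.cong) auto
  also have "\<dots> = \<pi> v" using p_sum[OF v] by (simp add: sum_distrib_left[symmetric])
  finally show ?thesis .
qed

lemma nbr_frac_bounds: "u \<in> V \<Longrightarrow> X \<subseteq> V \<Longrightarrow> 0 \<le> nbr_frac X u \<and> nbr_frac X u \<le> 1"
  using sum_mono2[OF finite_V, of X "p u"] p_sum[of u] p_nonneg
  unfolding nbr_frac_def by (simp add: sum_nonneg)

lemma nbr_frac_indicator:
  "X \<subseteq> V \<Longrightarrow> (\<Sum>l\<in>V. p u l * (if l \<in> X then 1 else 0)) = nbr_frac X u"
  unfolding nbr_frac_def using finite_V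
  by (simp add: if_distrib[of "\<lambda>x. _ * x"] sum.If_cases Int_absorb1 cong: if_cong)

lemma nbr_frac_co_indicator:
  assumes "X \<subseteq> V" "u \<in> V"
  shows "(\<Sum>l\<in>V. p u l * (if l \<in> X then 0 else 1)) = 1 - nbr_frac X u"
proof -
  have "(\<Sum>l\<in>V. p u l * (if l \<in> X then 0 else 1)) + (\<Sum>l\<in>V. p u l * (if l \<in> X then 1 else 0))
     = (\<Sum>v\<in>V. p u v)" unfolding sum.distrib[symmetric] by (rule sum.cong) auto
  then show ?thesis using nbr_frac_indicator[OF assms(1)] p_sum[OF assms(2)] by simp
qed

lemma lam_cases: "lam S u = 0 \<or> lam S u = 1"
  unfolding lam_def by auto

lemma birth_prob_0: "birth_prob 0 X u = nbr_frac X u"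
  unfolding birth_prob_def by simp

lemma birth_prob_approx:
  assumes "u \<in> V" "X \<subseteq> V" "d \<ge> 0"
  shows "\<bar>birth_prob d X u - nbr_frac X u\<bar> \<le> d"
    and "\<bar>birth_prob d X u - nbr_frac X u - d * lam S u * (nbr_frac X u * (1 - nbr_frac X u))\<bar> \<le> d\<^sup>2"
proof -
  have t: "0 \<le> d * lam S u" "d * lam S u \<le> d" "(d * lam S u)\<^sup>2 \<le> d\<^sup>2"
    using lam_cases[of u] assms(3) by auto
  note approx = reweighted_fraction_bounds[OF t(1), of "nbr_frac X u"]
  show "\<bar>birth_prob d X u - nbr_frac X u\<bar> \<le> d"
    using approx(1) nbr_frac_bounds[OF assms(1,2)] t(2) unfolding birth_prob_def by simp
  show "\<bar>birth_prob d X u - nbr_frac X u - d * lam S u * (nbr_frac X u * (1 - nbr_frac X u))\<bar> \<le> d\<^sup>2"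
    using approx(2) nbr_frac_bounds[OF assms(1,2)] t(3) unfolding birth_prob_def by simp
qed

lemma birth_prob_bounds:
  assumes "u \<in> V" "X \<subseteq> V" "d \<ge> 0"
  shows "0 \<le> birth_prob d X u \<and> birth_prob d X u \<le> 1"
proof -
  have a: "0 \<le> nbr_frac X u" "nbr_frac X u \<le> 1" using nbr_frac_bounds[OF assms(1,2)] by auto
  have l: "0 \<le> d * lam S u" using lam_cases[of u] assms(3) by auto
  then have "0 < 1 + d * lam S u * nbr_frac X u" using a by (simp add: add_pos_nonneg)
  moreover have "(1 + d * lam S u) * nbr_frac X u \<le> 1 + d * lam S u * nbr_frac X u"
    using a l by (simp add: algebra_simps)
  ultimately show ?thesis unfolding birth_prob_def using a l by (simp add: divide_le_eq_1)
qed

lemma sum_in_nbrs: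
  assumes "u \<in> V"
  shows "(\<Sum>x\<in>in_nbrs V E u. G x * w x u) = (\<Sum>x\<in>V. G x * wt E w u x)"
proof -
  have "(\<Sum>x\<in>in_nbrs V E u. G x * w x u) = (\<Sum>x\<in>V. if (x, u) \<in> E then G x * w x u else 0)"
    unfolding in_nbrs_def using finite_V by (simp add: sum.inter_filter)
  also have "\<dots> = (\<Sum>x\<in>V. G x * wt E w u x)"
    by (rule sum.cong) (use E_sym w_sym in \<open>auto simp: wt_def\<close>)
  finally show ?thesis .
qed

lemma sum_wt_split:
  assumes "X \<subseteq> V" "u \<in> V"
  shows "(\<Sum>x\<in>V. (if x \<in> X then a else b) * wt E w u x)
    = deg u * (a * nbr_frac X u + b * (1 - nbr_frac X u))"
proof -
  have "(\<Sum>x\<in>V. (if x \<in> X then a else b) * wt E w u x)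
      = deg u * (\<Sum>x\<in>V. a * (p u x * (if x \<in> X then 1 else 0)) + b * (p u x * (if x \<in> X then 0 else 1)))"
    unfolding p_eq sum_distrib_left by (intro sum.cong) (use deg_pos[OF assms(2)] in auto)
  then show ?thesis
    by (simp add: sum.distrib sum_distrib_left[symmetric] nbr_frac_indicator[OF assms(1)]
        nbr_frac_co_indicator[OF assms])
qed

lemma fbias_eq: "fbias S d X x u = (if x \<in> X then 1 + d * lam S u else 1)"
  unfolding fbias_def lam_def by auto

lemma expectation_after_choice:
  assumes u: "u \<in> V" and X: "X \<subseteq> V" and d: "d \<ge> 0"
  shows "(\<Sum>v\<in>in_nbrs V E u. choose_prob V E w S d X u v * H (update X u v))
       = birth_prob d X u * H (insert u X) + (1 - birth_prob d X u) * H (X - {u})"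
proof -
  define a where "a = nbr_frac X u"
  define t where "t = d * lam S u"
  have q: "1 + t * a > 0"
    using nbr_frac_bounds[OF u X] lam_cases[of u] d unfolding a_def t_def
    by (auto intro: add_pos_nonneg)
  have Z: "(\<Sum>x\<in>in_nbrs V E u. fbias S d X x u * w x u) = deg u * (1 + t * a)"
    using sum_in_nbrs[OF u, of "\<lambda>x. fbias S d X x u"] sum_wt_split[OF X u, of "1 + t" 1]
    unfolding fbias_eq a_def t_def by (simp add: algebra_simps)
  have "(\<Sum>v\<in>in_nbrs V E u. choose_prob V E w S d X u v * H (update X u v))
      = (\<Sum>x\<in>in_nbrs V E u. (fbias S d X x u * H (update X u x) / (deg u * (1 + t * a))) * w x u)"
    unfolding choose_prob_def Z by (rule sum.cong) auto
  also have "\<dots> = (\<Sum>x\<in>V. (if x \<in> X then (1 + t) * H (insert u X) else H (X - {u})) * wt E w u x)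
                    / (deg u * (1 + t * a))"
    unfolding sum_in_nbrs[OF u] sum_divide_distrib
    by (intro sum.cong refl) (simp add: fbias_eq update_def t_def)
  also have "\<dots> = ((1 + t) * a * H (insert u X) + (1 - a) * H (X - {u})) / (1 + t * a)"
    unfolding sum_wt_split[OF X u] a_def[symmetric] using deg_pos[OF u]
    by (subst mult_divide_mult_cancel_left[symmetric, of "deg u"]) (auto simp: algebra_simps)
  also have "\<dots> = birth_prob d X u * H (insert u X) + (1 - birth_prob d X u) * H (X - {u})"
  proof -
    have "birth_prob d X u = (1 + t) * a / (1 + t * a)"
      unfolding birth_prob_def a_def t_def by simp
    moreover have "1 - (1 + t) * a / (1 + t * a) = (1 - a) / (1 + t * a)"
      using q by (simp add: field_simps)
    ultimately show ?thesis by (simp add: add_divide_distrib)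
  qed
  finally show ?thesis .
qed

lemma hit_within_Suc:
  assumes "X \<subseteq> V" "d \<ge> 0"
  shows "hit d (Suc T) X = (if X = V then 1 else step d (hit d T) X)"
  using expectation_after_choice[OF _ assms] unfolding step_def n_def
  by (simp add: sum_distrib_left)

end

declare hit_within.simps(2)[simp del]

context positional_voter begin

definition "move_weight d X k =
  (if snd k then birth_prob d X (fst k) else 1 - birth_prob d X (fst k)) / n"
definition "move X k = (if snd k then insert (fst k) X else X - {fst k})"

lemma step_as_sum: "step d f X = (\<Sum>k\<in>V \<times> UNIV. move_weight d X k * f (move X k))"
proof -
  have "(\<Sum>k\<in>V \<times> UNIV. move_weight d X k * f (move X k))
      = (\<Sum>u\<in>V. \<Sum>b\<in>UNIV. move_weight d X (u, b) * f (move X (u, b)))"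
    by (simp add: sum.cartesian_product)
  also have "\<dots> = (\<Sum>u\<in>V. (birth_prob d X u * f (insert u X) + (1 - birth_prob d X u) * f (X - {u})) / n)"
    unfolding move_weight_def move_def by (simp add: UNIV_bool add_divide_distrib add.commute)
  finally show ?thesis unfolding step_def by (simp add: sum_divide_distrib)
qed

lemma step_const: "step d (\<lambda>_. c) X = c"
  unfolding step_def using average_const by (simp add: algebra_simps)

lemma step_diff: "step d (\<lambda>Y. f Y - g Y) X = step d f X - step d g X"
  unfolding step_as_sum by (simp add: sum_subtractf right_diff_distrib)

lemma step_scale: "step d (\<lambda>Y. c * f Y) X = c * step d f X"
  unfolding step_as_sum by (simp add: sum_distrib_left algebra_simps)

lemma step_sum: "step d (\<lambda>Y. \<Sum>q\<in>Q. c q * g q Y) X = (\<Sum>q\<in>Q. c q * step d (g q) X)"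
  unfolding step_as_sum sum_distrib_left
  by (subst sum.swap) (simp add: algebra_simps)

definition "jump f X u = f (insert u X) - f (X - {u})"

lemma step_bias_diff: "step d f X - step 0 f X
  = (1 / n) * (\<Sum>u\<in>V. (birth_prob d X u - nbr_frac X u) * jump f X u)"
proof -
  have "(\<Sum>u\<in>V. birth_prob d X u * f (insert u X) + (1 - birth_prob d X u) * f (X - {u}))
      - (\<Sum>u\<in>V. nbr_frac X u * f (insert u X) + (1 - nbr_frac X u) * f (X - {u}))
      = (\<Sum>u\<in>V. (birth_prob d X u - nbr_frac X u) * jump f X u)"
    unfolding jump_def by (simp add: sum_subtractf[symmetric] algebra_simps)
  then show ?thesis unfolding step_def birth_prob_0 by (simp only: right_diff_distrib[symmetric])
qed

lemma step_mono:
  assumes X: "X \<subseteq> V" and d: "d \<ge> 0" and le: "\<And>Y. Y \<subseteq> V \<Longrightarrow> f Y \<le> g Y"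
  shows "step d f X \<le> step d g X"
  unfolding step_def using n_pos
proof (intro mult_left_mono sum_mono)
  fix u assume u: "u \<in> V"
  have "f (insert u X) \<le> g (insert u X)" "f (X - {u}) \<le> g (X - {u})"
    using le[of "insert u X"] le[of "X - {u}"] X u by auto
  then show "birth_prob d X u * f (insert u X) + (1 - birth_prob d X u) * f (X - {u})
    \<le> birth_prob d X u * g (insert u X) + (1 - birth_prob d X u) * g (X - {u})"
    using birth_prob_bounds[OF u X d] by (intro add_mono mult_left_mono) auto
qed simp

lemma hit_bounds: "X \<subseteq> V \<Longrightarrow> d \<ge> 0 \<Longrightarrow> 0 \<le> hit d T X \<and> hit d T X \<le> 1"
proof (induction T arbitrary: X)
  case (Suc T)
  have "step d (\<lambda>_. 0) X \<le> step d (hit d T) X" "step d (hit d T) X \<le> step d (\<lambda>_. 1) X"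
    using Suc by (auto intro!: step_mono)
  then show ?case using hit_within_Suc[OF Suc.prems] by (simp add: step_const)
qed simp

lemma hit_mono: "X \<subseteq> V \<Longrightarrow> d \<ge> 0 \<Longrightarrow> hit d T X \<le> hit d (Suc T) X"
proof (induction T arbitrary: X)
  case 0
  then show ?case using hit_bounds[OF 0, of 1] hit_within_Suc[OF 0, of 0] by (cases "X = V") auto
next
  case (Suc T)
  then have "step d (hit d T) X \<le> step d (hit d (Suc T)) X" by (intro step_mono) auto
  then show ?case using hit_within_Suc[OF Suc.prems] hit_within_Suc[OF Suc.prems, of "Suc T"] by auto
qed

lemma hit_tendsto_fp: "X \<subseteq> V \<Longrightarrow> d \<ge> 0 \<Longrightarrow> (\<lambda>T. hit d T X) \<longlonglongrightarrow> \<phi> d X"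
proof -
  assume X: "X \<subseteq> V" and d: "d \<ge> 0"
  have "incseq (\<lambda>T. hit d T X)" using hit_mono[OF X d] by (intro incseq_SucI) auto
  moreover have "bdd_above (range (\<lambda>T. hit d T X))"
    using hit_bounds[OF X d] by (intro bdd_aboveI[of _ 1]) auto
  ultimately have "convergent (\<lambda>T. hit d T X)"
    using LIMSEQ_incseq_SUP convergent_def by blast
  then show ?thesis unfolding fp_def by (simp add: convergent_LIMSEQ_iff)
qed

lemma fp_V: "d \<ge> 0 \<Longrightarrow> \<phi> d V = 1"
proof -
  assume d: "d \<ge> 0"
  have "hit d T V = 1" for T by (cases T) (simp_all add: hit_within_Suc[OF _ d])
  then have "(\<lambda>T. hit d T V) \<longlonglongrightarrow> 1" by simp
  then show ?thesis using hit_tendsto_fp[OF _ d, of V] LIMSEQ_unique by blast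
qed

lemma fp_empty: "d \<ge> 0 \<Longrightarrow> \<phi> d {} = 0"
proof -
  assume d: "d \<ge> 0"
  have V: "V \<noteq> {}" using card_V by auto
  have "step d f {} = f {}" for f :: "'a set \<Rightarrow> real"
    unfolding step_def birth_prob_def nbr_frac_def using average_const by simp
  then have "hit d T {} = 0" for T
    using V by (induction T) (simp_all add: hit_within_Suc[OF _ d])
  then have "(\<lambda>T. hit d T {}) \<longlonglongrightarrow> 0" by simp
  then show ?thesis using hit_tendsto_fp[OF _ d, of "{}"] LIMSEQ_unique by blast
qed

lemma fp_harmonic:
  assumes X: "X \<subseteq> V" "X \<noteq> V" and d: "d \<ge> 0"
  shows "\<phi> d X = step d (\<phi> d) X"
proof -
  have "(\<lambda>T. hit d (Suc T) X) \<longlonglongrightarrow> \<phi> d X"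
    using hit_tendsto_fp[OF X(1) d] by (rule LIMSEQ_Suc)
  moreover have "(\<lambda>T. step d (hit d T) X) \<longlonglongrightarrow> step d (\<phi> d) X"
    unfolding step_def by (intro tendsto_intros hit_tendsto_fp) (use X d in auto)
  moreover have "hit d (Suc T) X = step d (hit d T) X" for T
    using hit_within_Suc[OF X(1) d] X(2) by simp
  ultimately show ?thesis using LIMSEQ_unique by simp
qed

lemma birth_prob_pos:
  assumes "u \<in> V" "X \<subseteq> V" "d \<ge> 0" "nbr_frac X u > 0"
  shows "birth_prob d X u > 0"
proof -
  have "0 \<le> d * lam S u" using lam_cases[of u] assms(3) by auto
  then show ?thesis unfolding birth_prob_def
    using assms(4) by (simp add: add_pos_nonneg)
qed

lemma absorbing_chain_configurations:
  assumes d: "d \<ge> 0"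
  shows "absorbing_chain (Pow V) {{}, V} (V \<times> UNIV) (move_weight d) move (\<lambda>X. card (V - X))"
proof
  fix X k assume X: "X \<in> Pow V" "X \<notin> {{}, V}" and k: "k \<in> V \<times> (UNIV :: bool set)"
  show "0 \<le> move_weight d X k"
    using birth_prob_bounds[of "fst k" X d] X k d n_pos unfolding move_weight_def by auto
  show "move X k \<in> Pow V" using X k unfolding move_def by auto
next
  fix X assume X: "X \<in> Pow V" "X \<notin> {{}, V}"
  show "(\<Sum>k\<in>V \<times> UNIV. move_weight d X k) = 1"
    using step_as_sum[of d "\<lambda>_. 1" X] step_const[of d 1 X] by simp
  obtain x y where xy: "x \<in> X" "y \<in> V" "y \<notin> X" using X by auto
  then have "(x, y) \<in> E\<^sup>*" using X strongly_connected by blast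
  then obtain v u where vu: "(v, u) \<in> E" "v \<in> X" "u \<notin> X"
    using exists_edge_leaving xy by metis
  have u: "u \<in> V" using vu E_subset by auto
  have "0 < p u v" using vu E_sym p_pos by blast
  also have "p u v \<le> nbr_frac X u"
    unfolding nbr_frac_def using X vu finite_subset[OF _ finite_V]
    by (intro member_le_sum p_nonneg) auto
  finally have "0 < move_weight d X (u, True)"
    using birth_prob_pos[OF u _ d] X n_pos unfolding move_weight_def by simp
  moreover have "V - move X (u, True) \<subset> V - X" unfolding move_def using u vu by auto
  then have "card (V - move X (u, True)) < card (V - X)" using finite_V by (simp add: psubset_card_mono)
  ultimately show "\<exists>k\<in>V \<times> UNIV. 0 < move_weight d X k
      \<and> (move X k \<in> {{}, V} \<or> card (V - move X k) < card (V - X))"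
    using u by blast
qed (use finite_V in auto)

lemma step_harmonic_eq_zero:
  assumes d: "d \<ge> 0"
    and harm: "\<And>Y. Y \<subseteq> V \<Longrightarrow> Y \<noteq> {} \<Longrightarrow> Y \<noteq> V \<Longrightarrow> f Y = step d f Y"
    and "f {} = 0" "f V = 0" "X \<subseteq> V"
  shows "f X = 0"
proof -
  interpret absorbing_chain "Pow V" "{{}, V}" "V \<times> UNIV" "move_weight d" move "\<lambda>X. card (V - X)"
    by (rule absorbing_chain_configurations[OF d])
  show ?thesis
    by (rule harmonic_eq_zero) (use assms in \<open>auto simp: step_as_sum[symmetric]\<close>)
qed

text \<open>Two random walkers at \<open>q\<close>; with probability 1/2 each, one of them takes a step.\<close>

definition "pair_weight q k = (if snd k then p (fst q) (fst k) else p (snd q) (fst k)) / 2"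
definition "pair_move q k = (if snd k then (fst k, snd q) else (fst q, fst k))"
definition "pair_dist q = (LEAST m. q \<in> E ^^ m)"

lemma pair_weight_sum:
  "(\<Sum>k\<in>V \<times> UNIV. pair_weight (i, j) k * g (pair_move (i, j) k))
   = (\<Sum>l\<in>V. p i l * g (l, j) + p j l * g (i, l)) / 2"
proof -
  have "(\<Sum>k\<in>V \<times> UNIV. pair_weight (i, j) k * g (pair_move (i, j) k))
      = (\<Sum>l\<in>V. \<Sum>b\<in>UNIV. pair_weight (i, j) (l, b) * g (pair_move (i, j) (l, b)))"
    by (simp add: sum.cartesian_product)
  also have "\<dots> = (\<Sum>l\<in>V. (p i l * g (l, j) + p j l * g (i, l)) / 2)"
    unfolding pair_weight_def pair_move_def by (simp add: UNIV_bool add_divide_distrib add.commute)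
  finally show ?thesis by (simp add: sum_divide_distrib)
qed

lemma pair_dist_step:
  assumes "i \<in> V" "j \<in> V" "i \<noteq> j"
  shows "\<exists>l. (i, l) \<in> E \<and> pair_dist (l, j) < pair_dist (i, j)"
proof -
  have "\<exists>m. (i, j) \<in> E ^^ m" using strongly_connected assms by (simp add: rtrancl_power)
  then have m: "(i, j) \<in> E ^^ pair_dist (i, j)" unfolding pair_dist_def by (rule LeastI_ex)
  then obtain m' where m': "pair_dist (i, j) = Suc m'"
    using assms(3) by (cases "pair_dist (i, j)") auto
  then obtain l where "(i, l) \<in> E" "(l, j) \<in> E ^^ m'" using m relpow_Suc_D2 by metis
  moreover from this have "pair_dist (l, j) \<le> m'" unfolding pair_dist_def by (intro Least_le)
  ultimately show ?thesis using m' by auto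
qed

lemma absorbing_chain_pairs:
  "absorbing_chain (V \<times> V) {q. fst q = snd q} (V \<times> UNIV) pair_weight pair_move pair_dist"
proof
  fix q k assume q: "q \<in> V \<times> V" and k: "k \<in> V \<times> (UNIV :: bool set)"
  show "0 \<le> pair_weight q k" unfolding pair_weight_def using p_nonneg by simp
  show "pair_move q k \<in> V \<times> V" using q k unfolding pair_move_def by auto
next
  fix q assume q: "q \<in> V \<times> V" "q \<notin> {q. fst q = snd q}"
  then obtain i j where ij: "q = (i, j)" "i \<in> V" "j \<in> V" "i \<noteq> j" by auto
  show "(\<Sum>k\<in>V \<times> UNIV. pair_weight q k) = 1"
    using pair_weight_sum[of i j "\<lambda>_. 1"] p_sum[OF ij(2)] p_sum[OF ij(3)] ij(1)
    by (simp add: sum.distrib)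
  obtain l where l: "(i, l) \<in> E" "pair_dist (l, j) < pair_dist (i, j)"
    using pair_dist_step[OF ij(2-4)] by blast
  then have "(l, True) \<in> V \<times> UNIV" "0 < pair_weight q (l, True)" "pair_move q (l, True) = (l, j)"
    using E_subset p_pos ij(1) unfolding pair_weight_def pair_move_def by auto
  then show "\<exists>k\<in>V \<times> UNIV. 0 < pair_weight q k
      \<and> (pair_move q k \<in> {q. fst q = snd q} \<or> pair_dist (pair_move q k) < pair_dist q)"
    using l(2) ij(1) by metis
qed (use finite_V in auto)

lemma pair_harmonic_eq_zero:
  assumes harm: "\<And>i j. i \<in> V \<Longrightarrow> j \<in> V \<Longrightarrow> i \<noteq> j
      \<Longrightarrow> f (i, j) = (\<Sum>l\<in>V. p i l * f (l, j) + p j l * f (i, l)) / 2"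
    and diag: "\<And>i. i \<in> V \<Longrightarrow> f (i, i) = 0"
    and q: "q \<in> V \<times> V"
  shows "f q = 0"
proof -
  interpret absorbing_chain "V \<times> V" "{q. fst q = snd q}" "V \<times> UNIV" pair_weight pair_move pair_dist
    by (rule absorbing_chain_pairs)
  show ?thesis
    by (rule harmonic_eq_zero) (use harm diag q in \<open>auto simp: pair_weight_sum\<close>)
qed

definition "mass X = (\<Sum>i\<in>X. \<pi> i)"

lemma mass_insert_remove: "u \<in> V \<Longrightarrow> Y \<subseteq> V \<Longrightarrow> mass (insert u Y) - mass (Y - {u}) = \<pi> u"
proof -
  assume "u \<in> V" "Y \<subseteq> V"
  then have "finite Y" using finite_V finite_subset by blast
  moreover have "insert u Y = insert u (Y - {u})" by auto
  ultimately show ?thesis unfolding mass_def by (metis Diff_iff add_diff_cancel_right' finite_Diff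
      insertI1 sum.insert)
qed

lemma step_0_mass: "X \<subseteq> V \<Longrightarrow> step 0 mass X = mass X"
proof -
  assume X: "X \<subseteq> V"
  have finX: "finite X" using X finite_V by (rule finite_subset)
  have "nbr_frac X u * mass (insert u X) + (1 - nbr_frac X u) * mass (X - {u})
      = mass X + \<pi> u * nbr_frac X u - (if u \<in> X then \<pi> u else 0)" for u
    unfolding mass_def using finX by (simp add: insert_absorb sum_diff1 algebra_simps)
  moreover have "(\<Sum>u\<in>V. \<pi> u * nbr_frac X u) = mass X"
    unfolding nbr_frac_def mass_def sum_distrib_left
    using X stationary by (subst sum.swap) (auto intro: sum.cong)
  moreover have "(\<Sum>u\<in>V. if u \<in> X then \<pi> u else 0) = mass X"
    unfolding mass_def using finite_V X by (simp add: sum.If_cases Int_absorb1)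
  ultimately show ?thesis
    unfolding step_def birth_prob_0 using n_pos by (simp add: sum.distrib sum_subtractf n_def)
qed

lemma fp_0: assumes "X \<subseteq> V" shows "\<phi> 0 X = mass X"
proof -
  have "\<phi> 0 X - mass X = 0"
  proof (rule step_harmonic_eq_zero[of 0 "\<lambda>X. \<phi> 0 X - mass X"])
    fix Y assume "Y \<subseteq> V" "Y \<noteq> {}" "Y \<noteq> V"
    then show "\<phi> 0 Y - mass Y = step 0 (\<lambda>X. \<phi> 0 X - mass X) Y"
      unfolding step_diff using fp_harmonic step_0_mass by simp
  qed (use assms fp_V fp_empty \<pi>_sum in \<open>auto simp: mass_def\<close>)
  then show ?thesis by simp
qed

sublocale pairs: absorbing_chain "V \<times> V" "{q. fst q = snd q}" "V \<times> UNIV" pair_weight pair_move pair_dist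
  by (rule absorbing_chain_pairs)

sublocale configs: absorbing_chain "Pow V" "{{}, V}" "V \<times> UNIV" "move_weight 0" move "\<lambda>X. card (V - X)"
  by (rule absorbing_chain_configurations) simp

lemma pair_matrix_apply:
  assumes "i \<in> V" "j \<in> V"
  shows "(\<Sum>r\<in>V \<times> V. pairs.chain_matrix (i, j) r * f r)
    = (if i = j then f (i, j) else f (i, j) - (\<Sum>l\<in>V. p i l * f (l, j) + p j l * f (i, l)) / 2)"
  using pairs.chain_matrix_apply[of "(i, j)" f] assms by (simp add: pair_weight_sum)

lemma config_matrix_apply:
  assumes "X \<subseteq> V"
  shows "(\<Sum>Y\<in>Pow V. configs.chain_matrix X Y * f Y)
    = (if X = {} \<or> X = V then f X else f X - step 0 f X)"
  using configs.chain_matrix_apply[of X f] assms by (simp add: step_as_sum)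

lemma psi_system_iff_matrix:
  "psi_system V E w \<psi> \<longleftrightarrow> (\<forall>q\<in>V \<times> V.
     (\<Sum>r\<in>V \<times> V. pairs.chain_matrix q r * \<psi> (fst r) (snd r)) = (if fst q = snd q then 0 else 1 / 2))"
proof -
  have "(x - s / 2 = 1 / 2) \<longleftrightarrow> (x = (1 + s) / 2)" for x s :: real by (auto simp: field_simps)
  then show ?thesis
    unfolding psi_system_def using pair_matrix_apply[of _ _ "\<lambda>r. \<psi> (fst r) (snd r)"] by auto
qed

lemma psi_exists: "\<exists>\<psi>. psi_system V E w \<psi>"
proof -
  obtain f where "\<forall>q\<in>V \<times> V. (\<Sum>r\<in>V \<times> V. pairs.chain_matrix q r * f r) = (if fst q = snd q then 0 else 1 / 2)"
    using pairs.chain_matrix_solvable[of "\<lambda>q. if fst q = snd q then 0 else 1 / 2"] by blast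
  then have "psi_system V E w (\<lambda>i j. f (i, j))" unfolding psi_system_iff_matrix by simp
  then show ?thesis by blast
qed

lemma psi_unique:
  assumes psi: "psi_system V E w \<psi>" and psi': "psi_system V E w \<psi>'" and "i \<in> V" "j \<in> V"
  shows "\<psi> i j = \<psi>' i j"
proof -
  define f where "f r = \<psi> (fst r) (snd r) - \<psi>' (fst r) (snd r)" for r
  have "f (i, j) = 0"
  proof (rule pair_harmonic_eq_zero)
    fix i j assume ij: "i \<in> V" "j \<in> V" "i \<noteq> j"
    have "(\<Sum>l\<in>V. p i l * f (l, j) + p j l * f (i, l))
       = (\<Sum>l\<in>V. p i l * \<psi> l j + p j l * \<psi> i l) - (\<Sum>l\<in>V. p i l * \<psi>' l j + p j l * \<psi>' i l)"
      unfolding f_def by (simp add: sum_subtractf[symmetric] algebra_simps)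
    moreover have "\<psi> i j = (1 + (\<Sum>l\<in>V. p i l * \<psi> l j + p j l * \<psi> i l)) / 2"
      "\<psi>' i j = (1 + (\<Sum>l\<in>V. p i l * \<psi>' l j + p j l * \<psi>' i l)) / 2"
      using psi psi' ij unfolding psi_system_def by blast+
    ultimately show "f (i, j) = (\<Sum>l\<in>V. p i l * f (l, j) + p j l * f (i, l)) / 2"
      unfolding f_def by (simp add: field_simps)
  qed (use assms in \<open>auto simp: f_def psi_system_def\<close>)
  then show ?thesis unfolding f_def by simp
qed

definition "discord q X = (if fst q \<in> X \<and> snd q \<notin> X then 1 else (0::real))"
definition "pair_rate q = \<pi> (fst q) * b2 V E w S (fst q) (snd q)"
definition "drift X = (1 / n) * (\<Sum>u\<in>V. lam S u * \<pi> u * (nbr_frac X u * (1 - nbr_frac X u)))"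

lemma drift_eq_pair_rates:
  assumes X: "X \<subseteq> V"
  shows "drift X = (1 / n) * (\<Sum>q\<in>V \<times> V. pair_rate q * discord q X)"
proof -
  define F where "F i j u = lam S u * \<pi> u
    * ((p u i * (if i \<in> X then 1 else 0)) * (p u j * (if j \<in> X then 0 else 1)))" for i j u
  have "(\<Sum>q\<in>V \<times> V. pair_rate q * discord q X) = (\<Sum>i\<in>V. \<Sum>j\<in>V. pair_rate (i, j) * discord (i, j) X)"
    by (simp add: sum.cartesian_product)
  also have "\<dots> = (\<Sum>i\<in>V. \<Sum>j\<in>V. \<Sum>u\<in>V. F i j u)"
  proof (intro sum.cong refl)
    fix i j assume "i \<in> V" "j \<in> V"
    then show "pair_rate (i, j) * discord (i, j) X = (\<Sum>u\<in>V. F i j u)"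
      unfolding pair_rate_def b2_def F_def discord_def sum_distrib_left sum_distrib_right
      by (intro sum.cong refl) (auto simp: reversible[of i] mult_ac)
  qed
  also have "\<dots> = (\<Sum>i\<in>V. \<Sum>u\<in>V. \<Sum>j\<in>V. F i j u)"
    by (rule sum.cong[OF refl], rule sum.swap)
  also have "\<dots> = (\<Sum>u\<in>V. lam S u * \<pi> u * ((\<Sum>i\<in>V. p u i * (if i \<in> X then 1 else 0))
      * (\<Sum>j\<in>V. p u j * (if j \<in> X then 0 else 1))))"
  proof -
    have "(\<Sum>i\<in>V. \<Sum>u\<in>V. \<Sum>j\<in>V. F i j u) = (\<Sum>u\<in>V. \<Sum>i\<in>V. \<Sum>j\<in>V. F i j u)"
      by (rule sum.swap)
    then show ?thesis unfolding sum_product by (simp only: F_def sum_distrib_left)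
  qed
  also have "\<dots> = n * drift X"
    unfolding drift_def using n_pos nbr_frac_indicator[OF X] nbr_frac_co_indicator[OF X]
    by (simp add: sum_distrib_left)
  finally show ?thesis using n_pos by simp
qed

lemma discord_step:
  assumes i: "i \<in> V" and j: "j \<in> V" and X: "X \<subseteq> V"
  shows "discord (i, j) X - step 0 (discord (i, j)) X
    = (2 / n) * (\<Sum>r\<in>V \<times> V. pairs.chain_matrix (i, j) r * discord r X)"
proof (cases "i = j")
  case True
  then have "discord (i, j) = (\<lambda>_. 0)" unfolding discord_def by auto
  then show ?thesis using pair_matrix_apply[OF i j] True by (simp add: step_const)
next
  case False
  define e where "e = discord (i, j) X"
  define A1 where "A1 = (if j \<in> X then 0 else nbr_frac X i)"
  define A2 where "A2 = (if i \<in> X then 1 - nbr_frac X j else 0)"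
  have "(\<Sum>l\<in>V. p i l * discord (l, j) X)
      = (if j \<in> X then 0 else 1) * (\<Sum>l\<in>V. p i l * (if l \<in> X then 1 else 0))"
    unfolding discord_def sum_distrib_left by (intro sum.cong) auto
  then have A1': "(\<Sum>l\<in>V. p i l * discord (l, j) X) = A1"
    using nbr_frac_indicator[OF X, of i] unfolding A1_def by simp
  have "(\<Sum>l\<in>V. p j l * discord (i, l) X)
      = (if i \<in> X then 1 else 0) * (\<Sum>l\<in>V. p j l * (if l \<in> X then 0 else 1))"
    unfolding discord_def sum_distrib_left by (intro sum.cong) auto
  then have A2': "(\<Sum>l\<in>V. p j l * discord (i, l) X) = A2"
    using nbr_frac_co_indicator[OF X j] unfolding A2_def by simp
  \<comment> \<open>Moving a node other than \<open>i\<close> or \<open>j\<close> does not change \<open>discord (i, j)\<close>.\<close>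
  have "nbr_frac X u * discord (i, j) (insert u X) + (1 - nbr_frac X u) * discord (i, j) (X - {u})
     = e + (if u = i then A1 - e else 0) + (if u = j then A2 - e else 0)" for u
    using False unfolding e_def A1_def A2_def discord_def by auto
  then have "step 0 (discord (i, j)) X = (1 / n) * (\<Sum>u\<in>V. e) + (1 / n) * ((A1 - e) + (A2 - e))"
    unfolding step_def birth_prob_0 using i j finite_V False
    by (simp add: sum.distrib algebra_simps add_divide_distrib)
  moreover have "(\<Sum>r\<in>V \<times> V. pairs.chain_matrix (i, j) r * discord r X) = e - (A1 + A2) / 2"
    using pair_matrix_apply[OF i j, of "\<lambda>r. discord r X"] False A1' A2'
    unfolding e_def by (simp add: sum.distrib)
  ultimately show ?thesis
    unfolding average_const e_def[symmetric] using n_pos by (simp add: field_simps)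
qed

end

text \<open>\<open>K\<close> solves the system adjoint to the \<open>\<psi>\<close>-system; \<open>\<Phi>\<close> turns out to be the derivative of the
  fixation probabilities at \<open>\<delta> = 0\<close>.\<close>

locale positional_voter_dual = positional_voter +
  fixes K :: "'a \<times> 'a \<Rightarrow> real"
  assumes K_adjoint: "\<And>t. t \<in> V \<times> V \<Longrightarrow> (\<Sum>s\<in>V \<times> V. K s * pairs.chain_matrix s t) = pair_rate t / 2"
begin

definition "\<Phi> X = (\<Sum>q\<in>V \<times> V. K q * discord q X)"
definition "remainder d X = \<phi> d X - mass X - d * \<Phi> X"
definition norm1 :: "('a set \<Rightarrow> real) \<Rightarrow> real" where "norm1 f = (\<Sum>Y\<in>Pow V. \<bar>f Y\<bar>)"

lemma \<Phi>_residual: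
  assumes X: "X \<subseteq> V"
  shows "\<Phi> X - step 0 \<Phi> X = drift X"
proof -
  have "\<Phi> X - step 0 \<Phi> X = (\<Sum>q\<in>V \<times> V. K q * (discord q X - step 0 (discord q) X))"
    using step_sum[of 0 K discord "V \<times> V" X] unfolding \<Phi>_def[abs_def]
    by (simp add: sum_subtractf[symmetric] right_diff_distrib)
  also have "\<dots> = (2 / n) * (\<Sum>q\<in>V \<times> V. \<Sum>r\<in>V \<times> V. K q * pairs.chain_matrix q r * discord r X)"
    unfolding sum_distrib_left
  proof (intro sum.cong refl)
    fix q assume "q \<in> V \<times> V"
    then show "K q * (discord q X - step 0 (discord q) X)
        = (\<Sum>r\<in>V \<times> V. 2 / n * (K q * pairs.chain_matrix q r * discord r X))"
      using discord_step[OF _ _ X, of "fst q" "snd q"] by (auto simp: sum_distrib_left mult_ac)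
  qed
  also have "\<dots> = (2 / n) * (\<Sum>r\<in>V \<times> V. (\<Sum>q\<in>V \<times> V. K q * pairs.chain_matrix q r) * discord r X)"
    by (subst sum.swap) (simp add: sum_distrib_right)
  also have "\<dots> = (1 / n) * (\<Sum>r\<in>V \<times> V. pair_rate r * discord r X)"
    unfolding sum_distrib_left by (intro sum.cong refl) (simp add: K_adjoint)
  finally show ?thesis using drift_eq_pair_rates[OF X] by simp
qed

lemma \<Phi>_empty: "\<Phi> {} = 0"
  unfolding \<Phi>_def discord_def by simp

lemma \<Phi>_V: "\<Phi> V = 0"
  unfolding \<Phi>_def discord_def by (intro sum.neutral) auto

lemma remainder_empty: "d \<ge> 0 \<Longrightarrow> remainder d {} = 0"
  unfolding remainder_def using fp_empty \<Phi>_empty by (simp add: mass_def)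

lemma remainder_V: "d \<ge> 0 \<Longrightarrow> remainder d V = 0"
  unfolding remainder_def using fp_V \<Phi>_V \<pi>_sum by (simp add: mass_def)

lemma jump_le_norm1:
  assumes "u \<in> V" "Y \<subseteq> V"
  shows "\<bar>jump f Y u\<bar> \<le> 2 * norm1 f"
proof -
  have "\<bar>f (insert u Y)\<bar> \<le> norm1 f" "\<bar>f (Y - {u})\<bar> \<le> norm1 f"
    unfolding norm1_def using assms finite_V by (auto intro!: member_le_sum)
  then show ?thesis
    unfolding jump_def using abs_triangle_ineq4[of "f (insert u Y)" "f (Y - {u})"] by linarith
qed

text \<open>The first-order terms cancel because \<open>\<Phi>\<close> absorbs the drift.\<close>

lemma remainder_residual:
  assumes d: "d \<ge> 0" and Y: "Y \<subseteq> V" "Y \<noteq> V"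
  shows "remainder d Y - step 0 (remainder d) Y = (1 / n) * (\<Sum>u\<in>V.
    \<pi> u * (birth_prob d Y u - nbr_frac Y u - d * lam S u * (nbr_frac Y u * (1 - nbr_frac Y u)))
    + (birth_prob d Y u - nbr_frac Y u) * (d * jump \<Phi> Y u + jump (remainder d) Y u))"
proof -
  have "remainder d = (\<lambda>X. (\<phi> d X - mass X) - d * \<Phi> X)"
    unfolding remainder_def by auto
  then have "step 0 (remainder d) Y = step 0 (\<phi> d) Y - step 0 mass Y - d * step 0 \<Phi> Y"
    by (simp only: step_diff step_scale)
  then have "remainder d Y - step 0 (remainder d) Y
      = (\<phi> d Y - step 0 (\<phi> d) Y) - (mass Y - step 0 mass Y) - d * (\<Phi> Y - step 0 \<Phi> Y)"
    unfolding remainder_def by (simp add: algebra_simps)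
  also have "\<dots> = (step d (\<phi> d) Y - step 0 (\<phi> d) Y) - d * drift Y"
    using fp_harmonic[OF Y d] step_0_mass[OF Y(1)] \<Phi>_residual[OF Y(1)] by simp
  also have "\<dots> = (1 / n) * (\<Sum>u\<in>V. (birth_prob d Y u - nbr_frac Y u) * jump (\<phi> d) Y u
      - \<pi> u * (d * lam S u * (nbr_frac Y u * (1 - nbr_frac Y u))))"
    unfolding step_bias_diff drift_def sum_subtractf right_diff_distrib
    by (simp add: sum_distrib_left mult_ac)
  also have "\<dots> = (1 / n) * (\<Sum>u\<in>V.
    \<pi> u * (birth_prob d Y u - nbr_frac Y u - d * lam S u * (nbr_frac Y u * (1 - nbr_frac Y u)))
    + (birth_prob d Y u - nbr_frac Y u) * (d * jump \<Phi> Y u + jump (remainder d) Y u))"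
  proof (intro arg_cong[where f = "\<lambda>x. (1 / n) * x"] sum.cong refl)
    fix u assume u: "u \<in> V"
    have "jump (\<phi> d) Y u = \<pi> u + d * jump \<Phi> Y u + jump (remainder d) Y u"
      using mass_insert_remove[OF u Y(1)] unfolding jump_def remainder_def by (simp add: algebra_simps)
    then show "(birth_prob d Y u - nbr_frac Y u) * jump (\<phi> d) Y u
        - \<pi> u * (d * lam S u * (nbr_frac Y u * (1 - nbr_frac Y u)))
      = \<pi> u * (birth_prob d Y u - nbr_frac Y u - d * lam S u * (nbr_frac Y u * (1 - nbr_frac Y u)))
        + (birth_prob d Y u - nbr_frac Y u) * (d * jump \<Phi> Y u + jump (remainder d) Y u)"
      by (simp add: algebra_simps)
  qed
  finally show ?thesis .
qed

lemma remainder_residual_bound: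
  assumes d: "d \<ge> 0" and Y: "Y \<subseteq> V" "Y \<noteq> V"
  shows "\<bar>remainder d Y - step 0 (remainder d) Y\<bar> \<le> d\<^sup>2 * (1 + 2 * norm1 \<Phi>) + 2 * d * norm1 (remainder d)"
proof -
  define \<sigma> where "\<sigma> = d\<^sup>2 * (1 + 2 * norm1 \<Phi>) + 2 * d * norm1 (remainder d)"
  have term_bound: "\<bar>\<pi> u * (birth_prob d Y u - nbr_frac Y u - d * lam S u * (nbr_frac Y u * (1 - nbr_frac Y u)))
    + (birth_prob d Y u - nbr_frac Y u) * (d * jump \<Phi> Y u + jump (remainder d) Y u)\<bar> \<le> \<sigma>"
    if u: "u \<in> V" for u
  proof -
    have "\<bar>\<pi> u * (birth_prob d Y u - nbr_frac Y u - d * lam S u * (nbr_frac Y u * (1 - nbr_frac Y u)))\<bar>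
        \<le> 1 * d\<^sup>2"
      unfolding abs_mult using \<pi>_nonneg \<pi>_le_1[OF u] birth_prob_approx(2)[OF u Y(1) d]
      by (intro mult_mono) auto
    moreover have "\<bar>d * jump \<Phi> Y u + jump (remainder d) Y u\<bar> \<le> d * (2 * norm1 \<Phi>) + 2 * norm1 (remainder d)"
      using jump_le_norm1[OF u Y(1), of \<Phi>] jump_le_norm1[OF u Y(1), of "remainder d"] d
      by (simp add: abs_mult mult_left_mono abs_triangle_ineq order_trans[OF abs_triangle_ineq] add_mono)
    then have "\<bar>(birth_prob d Y u - nbr_frac Y u) * (d * jump \<Phi> Y u + jump (remainder d) Y u)\<bar>
        \<le> d * (d * (2 * norm1 \<Phi>) + 2 * norm1 (remainder d))"
      unfolding abs_mult using birth_prob_approx(1)[OF u Y(1) d] by (intro mult_mono) auto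
    ultimately show ?thesis unfolding \<sigma>_def power2_eq_square by (simp add: algebra_simps abs_triangle_ineq)
  qed
  have "\<bar>(1 / n) * (\<Sum>u\<in>V. \<pi> u * (birth_prob d Y u - nbr_frac Y u
      - d * lam S u * (nbr_frac Y u * (1 - nbr_frac Y u)))
      + (birth_prob d Y u - nbr_frac Y u) * (d * jump \<Phi> Y u + jump (remainder d) Y u))\<bar>
    \<le> (1 / n) * (\<Sum>u\<in>V. \<sigma>)"
  proof -
    have "\<bar>\<Sum>u\<in>V. \<pi> u * (birth_prob d Y u - nbr_frac Y u
      - d * lam S u * (nbr_frac Y u * (1 - nbr_frac Y u)))
      + (birth_prob d Y u - nbr_frac Y u) * (d * jump \<Phi> Y u + jump (remainder d) Y u)\<bar>
      \<le> (\<Sum>u\<in>V. \<sigma>)"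
      by (rule order_trans[OF sum_abs sum_mono]) (use term_bound in auto)
    then show ?thesis unfolding abs_mult using n_pos by (simp add: divide_right_mono)
  qed
  then show ?thesis unfolding remainder_residual[OF assms] average_const \<sigma>_def .
qed

lemma remainder_norm_quadratic:
  "\<exists>C r. 0 < r \<and> (\<forall>d. 0 \<le> d \<longrightarrow> d < r \<longrightarrow> norm1 (remainder d) \<le> C * d\<^sup>2)"
proof -
  obtain \<beta> where \<beta>: "\<beta> \<ge> 0" and inv: "\<And>f s. \<forall>X\<in>Pow V.
      \<bar>\<Sum>Y\<in>Pow V. configs.chain_matrix X Y * f Y\<bar> \<le> s \<Longrightarrow> (\<Sum>X\<in>Pow V. \<bar>f X\<bar>) \<le> \<beta> * s"
    using configs.chain_matrix_bounded_below by blast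
  define N where "N = 1 + 2 * norm1 \<Phi>"
  have "norm1 (remainder d) \<le> 2 * \<beta> * N * d\<^sup>2" if d: "0 \<le> d" "d < 1 / (4 * \<beta> + 1)" for d
  proof -
    have "\<forall>X\<in>Pow V. \<bar>\<Sum>Y\<in>Pow V. configs.chain_matrix X Y * remainder d Y\<bar>
        \<le> d\<^sup>2 * N + (2 * d) * norm1 (remainder d)"
      using config_matrix_apply[of _ "remainder d"] remainder_residual_bound[OF d(1)]
        remainder_empty[OF d(1)] remainder_V[OF d(1)] d(1) N_def
      by (auto simp: norm1_def sum_nonneg)
    then have "norm1 (remainder d) \<le> \<beta> * (d\<^sup>2 * N + (2 * d) * norm1 (remainder d))"
      unfolding norm1_def by (rule inv)
    moreover have "\<beta> * (2 * d) \<le> 1 / 2"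
      using d \<beta> by (simp add: field_simps)
    then have "\<beta> * ((2 * d) * norm1 (remainder d)) \<le> norm1 (remainder d) / 2"
      using mult_right_mono[of "\<beta> * (2 * d)" "1 / 2" "norm1 (remainder d)"]
      by (simp add: norm1_def sum_nonneg mult_ac)
    ultimately show ?thesis by (simp add: algebra_simps)
  qed
  moreover have "0 < 1 / (4 * \<beta> + 1)" using \<beta> by simp
  ultimately show ?thesis by blast
qed

lemma fp_avg_has_derivative_\<Phi>:
  "(fp_avg V E w S has_real_derivative (1 / n) * (\<Sum>u\<in>V. \<Phi> {u})) (at 0 within {0..})"
proof -
  obtain C r where r: "0 < r" and C: "\<And>d. 0 \<le> d \<Longrightarrow> d < r \<Longrightarrow> norm1 (remainder d) \<le> C * d\<^sup>2"
    using remainder_norm_quadratic by blast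
  show ?thesis
  proof (rule has_real_derivative_at_right_if_error_bound[OF r])
    fix d :: real assume d: "0 < d" "d < 0 + r"
    define A where "A = (1 / n) * (\<Sum>u\<in>V. remainder d {u})"
    have "fp_avg V E w S d - fp_avg V E w S 0 = d * ((1 / n) * (\<Sum>u\<in>V. \<Phi> {u})) + A"
      unfolding fp_avg_def n_def[symmetric] remainder_def A_def
      by (simp add: fp_0 mass_def sum.distrib sum_subtractf sum_distrib_left algebra_simps)
    then have "(fp_avg V E w S d - fp_avg V E w S 0) / (d - 0) - (1 / n) * (\<Sum>u\<in>V. \<Phi> {u}) = A / d"
      using d by (simp add: field_simps)
    moreover have "\<bar>A\<bar> \<le> norm1 (remainder d)"
    proof -
      have "\<bar>\<Sum>u\<in>V. remainder d {u}\<bar> \<le> (\<Sum>u\<in>V. norm1 (remainder d))"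
        unfolding norm1_def using finite_V
        by (intro order_trans[OF sum_abs sum_mono] member_le_sum) auto
      then show ?thesis unfolding A_def
        using n_pos by (simp add: abs_mult pos_divide_le_eq n_def mult.commute)
    qed
    then have "\<bar>A / d\<bar> \<le> C * (d - 0)"
      using C[of d] d by (simp add: abs_divide pos_divide_le_eq power2_eq_square mult.assoc)
    ultimately show "\<bar>(fp_avg V E w S d - fp_avg V E w S 0) / (d - 0) - (1 / n) * (\<Sum>u\<in>V. \<Phi> {u})\<bar>
        \<le> C * (d - 0)"
      by simp
  qed
qed

lemma \<Phi>_singletons:
  assumes psi: "psi_system V E w \<psi>"
  shows "(\<Sum>u\<in>V. \<Phi> {u}) = (\<Sum>q\<in>V \<times> V. pair_rate q * \<psi> (fst q) (snd q))"
proof -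
  have "(\<Sum>u\<in>V. discord q {u}) = 2 * (\<Sum>r\<in>V \<times> V. pairs.chain_matrix q r * \<psi> (fst r) (snd r))"
    if q: "q \<in> V \<times> V" for q
  proof -
    have "(\<Sum>u\<in>V. discord q {u}) = (\<Sum>u\<in>V. if u = fst q then (if fst q = snd q then 0 else 1) else 0)"
      unfolding discord_def by (intro sum.cong) auto
    also have "\<dots> = (if fst q = snd q then 0 else 1)" using q finite_V by auto
    finally show ?thesis using psi q unfolding psi_system_iff_matrix by auto
  qed
  then have "(\<Sum>u\<in>V. \<Phi> {u}) = (\<Sum>q\<in>V \<times> V. K q * (2 * (\<Sum>r\<in>V \<times> V. pairs.chain_matrix q r * \<psi> (fst r) (snd r))))"
    unfolding \<Phi>_def by (subst sum.swap) (simp add: sum_distrib_left[symmetric])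
  also have "\<dots> = 2 * (\<Sum>r\<in>V \<times> V. (\<Sum>q\<in>V \<times> V. K q * pairs.chain_matrix q r) * \<psi> (fst r) (snd r))"
    unfolding sum_distrib_left sum_distrib_right by (subst sum.swap) (simp add: mult_ac)
  also have "\<dots> = (\<Sum>r\<in>V \<times> V. pair_rate r * \<psi> (fst r) (snd r))"
    unfolding sum_distrib_left by (intro sum.cong refl) (simp add: K_adjoint)
  finally show ?thesis .
qed

end

context positional_voter begin

lemma fp_avg_has_derivative:
  assumes "psi_system V E w \<psi>"
  shows "(fp_avg V E w S has_real_derivative
     (1 / real (card V)) * (\<Sum>i\<in>V. \<Sum>j\<in>V. fp V E w S 0 {i} * b2 V E w S i j * \<psi> i j))
     (at 0 within {0..})"
proof -
  obtain K where "\<forall>t\<in>V \<times> V. (\<Sum>s\<in>V \<times> V. K s * pairs.chain_matrix s t) = pair_rate t / 2"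
    using pairs.chain_matrix_adjoint_solvable[of "\<lambda>t. pair_rate t / 2"] by blast
  then interpret positional_voter_dual V E w S K by unfold_locales blast
  have "(\<Sum>u\<in>V. \<Phi> {u}) = (\<Sum>i\<in>V. \<Sum>j\<in>V. fp V E w S 0 {i} * b2 V E w S i j * \<psi> i j)"
    unfolding \<Phi>_singletons[OF assms] pair_rate_def
    by (simp add: sum.cartesian_product split_beta fp_0 mass_def)
  then show ?thesis using fp_avg_has_derivative_\<Phi> unfolding n_def by simp
qed

end

lemma fp_avg_single_node:
  assumes "V = {a}"
  shows "fp_avg V E w S d = 1"
proof -
  have "hit_within V E w S d T V = 1" for T by (cases T) (simp_all add: hit_within.simps)
  then have "fp V E w S d {a} = 1" unfolding fp_def assms[symmetric] by (simp add: limI)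
  then show ?thesis unfolding fp_avg_def assms by simp
qed

theorem mainTheorem10:
  fixes V :: "'a set" and E :: "('a \<times> 'a) set" and w :: "'a \<Rightarrow> 'a \<Rightarrow> real" and S :: "'a set"
  assumes finV: "finite V" and neV: "V \<noteq> {}"
    and E_sub: "E \<subseteq> V \<times> V"
    and w_pos: "\<forall>i j. (i, j) \<in> E \<longrightarrow> w i j > 0"
    and strong: "\<forall>i\<in>V. \<forall>j\<in>V. (i, j) \<in> E\<^sup>*"
    and E_sym: "\<forall>i j. (i, j) \<in> E \<longleftrightarrow> (j, i) \<in> E"
    and w_sym: "\<forall>i j. (i, j) \<in> E \<longrightarrow> w i j = w j i"
    and S_sub: "S \<subseteq> V"
  shows "(\<exists>\<psi>. psi_system V E w \<psi>)
    \<and> (\<forall>\<psi> \<psi>'. psi_system V E w \<psi> \<and> psi_system V E w \<psi>' \<longrightarrow>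
          (\<forall>i\<in>V. \<forall>j\<in>V. \<psi> i j = \<psi>' i j))
    \<and> (\<forall>\<psi>. psi_system V E w \<psi> \<longrightarrow>
          ((\<lambda>d. fp_avg V E w S d) has_real_derivative
             ((1 / real (card V)) *
               (\<Sum>i\<in>V. \<Sum>j\<in>V. fp V E w S 0 {i} * b2 V E w S i j * \<psi> i j)))
          (at 0 within {0..}))"
proof (cases "card V \<ge> 2")
  case True
  interpret positional_voter V E w S
    using finV E_sub w_pos strong E_sym w_sym True by unfold_locales
  show ?thesis using psi_exists psi_unique fp_avg_has_derivative by auto
next
  case False
  moreover have "card V \<noteq> 0" using finV neV by simp
  ultimately have "card V = 1" by linarith
  then obtain a where V: "V = {a}" by (rule card_1_singletonE)
  then have psi: "psi_system V E w \<psi> \<longleftrightarrow> \<psi> a a = 0" for \<psi> unfolding psi_system_def by simp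
  have deriv: "((\<lambda>d. fp_avg V E w S d) has_real_derivative 0) (at 0 within {0..})"
    unfolding fp_avg_single_node[OF V] by (rule DERIV_const)
  show ?thesis
  proof (intro conjI allI impI ballI)
    show "\<exists>\<psi>. psi_system V E w \<psi>" using psi[of "\<lambda>_ _. 0"] by blast
    fix \<psi> \<psi>' i j assume "psi_system V E w \<psi> \<and> psi_system V E w \<psi>'" "i \<in> V" "j \<in> V"
    then show "\<psi> i j = \<psi>' i j" unfolding psi using V by simp
  next
    fix \<psi> assume "psi_system V E w \<psi>"
    then have "\<psi> a a = 0" using psi by blast
    then show "((\<lambda>d. fp_avg V E w S d) has_real_derivative
        (1 / real (card V)) * (\<Sum>i\<in>V. \<Sum>j\<in>V. fp V E w S 0 {i} * b2 V E w S i j * \<psi> i j))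
        (at 0 within {0..})"
      using deriv V by simp
  qed
qed

end
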